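(* Let $\lambda\in P$ and let $\lambda'$ be an enlargement of $\lambda$. Then there is a finite sequence $\lambda=\nu^{(0)},\nu^{(1)},\dots,\nu^{(N)}=\lambda'$ such that for each $0\le a\le N-1$ one of the following holds: (i) $\nu^{(a+1)}=\omega^{\pm1}\nu^{(a)}$; (ii) $\nu^{(a+1)}=s_i\nu^{(a)}$ for some $i$ and $\nu^{(a+1)}\succ\nu^{(a)}$; (iii) $\nu^{(a+1)}=s_i\nu^{(a)}$ for some $i$, $\nu^{(a+1)}\prec\nu^{(a)}$, and $\nu^{(a+1)}$ is intertwined with $\nu^{(a)}$.
   Context: Let $P=\mathbb Z^n$. For $\lambda\in P$, $\rho(\lambda)$ is the unique permutation of $(\frac{n-1}2,\dots,-\frac{n-1}2)$ with $\rho(\lambda)_i>\rho(\lambda)_j$ iff $\lambda_i>\lambda_j$ or ($\lambda_i=\lambda_j$, $i<j$); let $(i_1,\dots,i_n)$ be the indices with $\rho(\lambda)_{i_a}=\frac{n+1}2-a$. $\omega\lambda=(\lambda_2,\dots,\lambda_n,\lambda_1+1)$, $s_i\lambda$ swaps $\lambda_i,\lambda_{i+1}$. $\lambda\succ\mu$ iff $\lambda^+>\mu^+$ in dominance order, or $\lambda^+=\mu^+$ and $\lambda>\mu$ in dominance order ($\lambda^+$ = decreasing rearrangement; $\lambda\ge\mu$ iff $\sum_{j\le l}\lambda_j\ge\sum_{j\le l}\mu_j$ for all $l$). Fix $1\le k\le n-1$, $r\ge2$, $g=\gcd(k+1,r-1)$, $\tau=e^{2\pi\sqrt{-1}/(r-1)}$,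 specialization $(\ast)$: $t=u^{(r-1)/g}$, $q=\tau u^{-(k+1)/g}$. For $f$ a Laurent polynomial, $u_\lambda(f)=f(t^{-\rho(\lambda)_1}q^{-\lambda_1},\dots,t^{-\rho(\lambda)_n}q^{-\lambda_n})$. "Intertwined" is the equivalence relation on $P$ generated by: $\lambda\sim\omega\lambda$; and $\lambda\sim s_i\lambda$ whenever $s_i\lambda\ne\lambda$ and, at $(\ast)$, $u_\lambda(x_i/x_{i+1})\notin\{1,t,t^{-1}\}$. An enlargement of $\lambda$ is $\lambda'\in P$ with $\rho(\lambda')=\rho(\lambda)$ and $\lambda'_{i_a}-\lambda'_{i_{a+1}}>\max\{[\frac n{k+1}](r-1),\lambda_{i_a}-\lambda_{i_{a+1}}\}$ for all $1\le a\le n-1$. *)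

theory Defs
  imports Complex_Main "HOL-Computational_Algebra.Formal_Laurent_Series"
begin

(* Elements of P = Z^n are int lists of length n; coordinates are 0-based:
   coordinate j (0 <= j < n) of a list is the paper's coordinate j+1. *)

(* position a (1-based) of index i in the ordering: rho(lam)_i = (n+1)/2 - a *)
definition pos :: "int list \<Rightarrow> nat \<Rightarrow> nat" where
  "pos lam i = Suc (card {j. j < length lam \<and>
       (lam ! j > lam ! i \<or> (lam ! j = lam ! i \<and> j < i))})"

definition rho :: "int list \<Rightarrow> nat \<Rightarrow> real" where
  "rho lam i = (real (length lam) + 1) / 2 - real (pos lam i)"

(* i_a : the (0-based) index i with rho(lam)_i = (n+1)/2 - a, for 1 <= a <= n *)
definition idx :: "int list \<Rightarrow> nat \<Rightarrow> nat" where
  "idx lam a = (THE i. i < length lam \<and> rho lam i = (real (length lam) + 1) / 2 - real a)"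

definition omega :: "int list \<Rightarrow> int list" where
  "omega lam = tl lam @ [hd lam + 1]"

(* s_{i+1} in the paper's 1-based notation: swaps coordinates i and i+1 (0-based) *)
definition swp :: "nat \<Rightarrow> int list \<Rightarrow> int list" where
  "swp i lam = lam[i := lam ! (i+1), i+1 := lam ! i]"

definition dom_ge :: "int list \<Rightarrow> int list \<Rightarrow> bool" where
  "dom_ge x y \<longleftrightarrow> (\<forall>l \<le> length x. sum_list (take l x) \<ge> sum_list (take l y))"

definition dom_gt :: "int list \<Rightarrow> int list \<Rightarrow> bool" where
  "dom_gt x y \<longleftrightarrow> dom_ge x y \<and> x \<noteq> y"

definition dplus :: "int list \<Rightarrow> int list" where
  "dplus x = rev (sort x)"

definition succ_ord :: "int list \<Rightarrow> int list \<Rightarrow> bool" where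
  "succ_ord x y \<longleftrightarrow> dom_gt (dplus x) (dplus y) \<or> (dplus x = dplus y \<and> dom_gt x y)"

(* specialization (\<ast>): u is a formal variable (formal Laurent series over C) *)
definition tau :: "nat \<Rightarrow> complex" where
  "tau r = cis (2 * pi / real (r - 1))"

definition gg :: "nat \<Rightarrow> nat \<Rightarrow> nat" where
  "gg k r = gcd (k + 1) (r - 1)"

definition t_sp :: "nat \<Rightarrow> nat \<Rightarrow> complex fls" where
  "t_sp k r = fls_X powi int ((r - 1) div gg k r)"

definition q_sp :: "nat \<Rightarrow> nat \<Rightarrow> complex fls" where
  "q_sp k r = fls_const (tau r) * fls_X powi (- int ((k + 1) div gg k r))"

(* u_lam(x_i / x_{i+1}) at (\<ast>) (0-based i): 
   t^{-rho_i} q^{-lam_i} / (t^{-rho_{i+1}} q^{-lam_{i+1}})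
   = t^{rho_{i+1} - rho_i} q^{lam_{i+1} - lam_i}; rho_{i+1}-rho_i = pos_i - pos_{i+1}. *)
definition u_ratio :: "nat \<Rightarrow> nat \<Rightarrow> int list \<Rightarrow> nat \<Rightarrow> complex fls" where
  "u_ratio k r lam i =
     t_sp k r powi (int (pos lam i) - int (pos lam (i+1))) *
     q_sp k r powi (lam ! (i+1) - lam ! i)"

definition gen_rel :: "nat \<Rightarrow> nat \<Rightarrow> nat \<Rightarrow> int list \<Rightarrow> int list \<Rightarrow> bool" where
  "gen_rel n k r lam mu \<longleftrightarrow> length lam = n \<and>
     (mu = omega lam \<or>
      (\<exists>i. i + 1 < n \<and> mu = swp i lam \<and> mu \<noteq> lam \<and>
           u_ratio k r lam i \<notin> {1, t_sp k r, inverse (t_sp k r)}))"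

definition intertwined :: "nat \<Rightarrow> nat \<Rightarrow> nat \<Rightarrow> int list \<Rightarrow> int list \<Rightarrow> bool" where
  "intertwined n k r = equivclp (gen_rel n k r)"

definition enlargement :: "nat \<Rightarrow> nat \<Rightarrow> int list \<Rightarrow> int list \<Rightarrow> bool" where
  "enlargement k r lam lam' \<longleftrightarrow> length lam' = length lam \<and>
     (\<forall>i < length lam. rho lam' i = rho lam i) \<and>
     (\<forall>a. 1 \<le> a \<and> a \<le> length lam - 1 \<longrightarrow>
        lam' ! idx lam a - lam' ! idx lam (a+1) >
        max (int (length lam div (k+1)) * (int r - 1)) (lam ! idx lam a - lam ! idx lam (a+1)))"

definition step_ok :: "nat \<Rightarrow> nat \<Rightarrow> nat \<Rightarrow> int list \<Rightarrow> int list \<Rightarrow> bool" where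
  "step_ok n k r nu nu' \<longleftrightarrow>
     nu' = omega nu \<or> nu = omega nu' \<or>
     (\<exists>i. i + 1 < n \<and> nu' = swp i nu \<and> succ_ord nu' nu) \<or>
     (\<exists>i. i + 1 < n \<and> nu' = swp i nu \<and> succ_ord nu nu' \<and> intertwined n k r nu' nu)"

end

theory Submission
  imports Defs "HOL-Library.Multiset"
begin

(* Moves of type (i) and (ii) already suffice.  Since \<omega>^n adds 1 to every coordinate and
   \<omega>^(-1) is allowed, constant shifts are free.  If S is a set of coordinates that is closed
   upwards for the order given by \<rho>(\<nu>), then \<nu> + 1_S is reached by increasing swaps that move
   the entries in S to the front, |S| applications of \<omega> that move them to the back while
   raising them by 1, and increasing swaps that move them back to their places.  For an
   enlargement, \<lambda>' - \<lambda> is weakly decreasing along i_1, ..., i_n, so after a shift it is a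
   sum of such indicator vectors 1_S. *)

lemma rtranclp_imp_chain_list:
  assumes "R\<^sup>*\<^sup>* a b"
  shows "\<exists>xs. xs \<noteq> [] \<and> hd xs = a \<and> last xs = b \<and>
           (\<forall>i. i + 1 < length xs \<longrightarrow> R (xs ! i) (xs ! (i+1)))"
  using assms
proof (induction rule: converse_rtranclp_induct)
  case base
  show ?case by (intro exI[of _ "[b]"]) simp
next
  case (step a a')
  then obtain xs where xs: "xs \<noteq> []" "hd xs = a'" "last xs = b"
    "\<forall>i. i + 1 < length xs \<longrightarrow> R (xs ! i) (xs ! (i+1))" by blast
  show ?case
  proof (intro exI[of _ "a # xs"] conjI allI impI)
    fix i assume "i + 1 < length (a # xs)"
    then show "R ((a # xs) ! i) ((a # xs) ! (i+1))"
      using xs step.hyps(1) by (cases i) (auto simp: hd_conv_nth)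
  qed (use xs in auto)
qed

section \<open>Increasing swaps\<close>

lemma length_swp [simp]: "length (swp i l) = length l"
  by (simp add: swp_def)

lemma swp_nth:
  "i + 1 < length l \<Longrightarrow> p < length l \<Longrightarrow>
   swp i l ! p = (if p = i then l ! (i+1) else if p = i + 1 then l ! i else l ! p)"
  by (auto simp: swp_def nth_list_update)

lemma swp_Suc_Cons [simp]: "swp (Suc i) (x # l) = x # swp i l"
  by (simp add: swp_def)

lemma swp_0_Cons_Cons [simp]: "swp 0 (x # y # l) = y # x # l"
  by (simp add: swp_def)

lemma dplus_swp: "i + 1 < length l \<Longrightarrow> dplus (swp i l) = dplus l"
  using mset_swap[of "i+1" l i] unfolding swp_def dplus_def
  by (metis Suc_eq_plus1 Suc_lessD sorted_list_of_multiset_mset)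

lemma dom_gt_swp:
  assumes i: "i + 1 < length l" and ascent: "l ! i < l ! (i+1)"
  shows "dom_gt (swp i l) l"
proof -
  define d where "d = l ! (i+1) - l ! i"
  have partial_sums: "sum_list (take L (swp i l)) =
      sum_list (take L l) + (if i < L then d else 0) - (if i + 1 < L then d else 0)"
    if L: "L \<le> length l" for L
  proof -
    have "swp i l ! p = l ! p + (if p = i then d else 0) - (if p = i + 1 then d else 0)"
      if "p < L" for p
      using that L i by (auto simp: swp_nth d_def)
    then have "(\<Sum>p<L. swp i l ! p) =
        (\<Sum>p<L. l ! p) + (\<Sum>p<L. if p = i then d else 0) - (\<Sum>p<L. if p = i + 1 then d else 0)"
      by (simp add: sum.distrib sum_subtractf)
    then show ?thesis
      using L by (simp add: sum_list_sum_nth min_def atLeast0LessThan)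
  qed
  have "swp i l \<noteq> l"
    using i ascent swp_nth[OF i, of i] by force
  moreover have "d > 0"
    using ascent by (simp add: d_def)
  ultimately show ?thesis
    unfolding dom_gt_def dom_ge_def using partial_sums by auto
qed

definition ascent_swap :: "int list \<Rightarrow> int list \<Rightarrow> bool" where
  "ascent_swap l l' \<longleftrightarrow> (\<exists>i. i + 1 < length l \<and> l ! i < l ! (i+1) \<and> l' = swp i l)"

lemma ascent_swap_length: "ascent_swap l l' \<Longrightarrow> length l' = length l"
  by (auto simp: ascent_swap_def)

lemma ascent_swap_step_ok: "ascent_swap l l' \<Longrightarrow> length l = n \<Longrightarrow> step_ok n k r l l'"
  unfolding ascent_swap_def step_ok_def succ_ord_def
  using dplus_swp dom_gt_swp by blast

lemma ascent_swap_Cons: "ascent_swap l l' \<Longrightarrow> ascent_swap (x # l) (x # l')"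
  unfolding ascent_swap_def by (metis Suc_eq_plus1 length_Cons not_less_eq nth_Cons_Suc swp_Suc_Cons)

lemma ascent_swaps_Cons: "ascent_swap\<^sup>*\<^sup>* l l' \<Longrightarrow> ascent_swap\<^sup>*\<^sup>* (x # l) (x # l')"
  by (induction rule: rtranclp_induct) (auto intro: rtranclp.rtrancl_into_rtrancl ascent_swap_Cons)

lemma ascent_swap_head: "x < y \<Longrightarrow> ascent_swap (x # y # l) (y # x # l)"
  unfolding ascent_swap_def by (intro exI[of _ 0]) simp

lemma ascent_swaps_move_right:
  "\<forall>b\<in>set B. x < b \<Longrightarrow> ascent_swap\<^sup>*\<^sup>* (x # B @ C) (B @ x # C)"
proof (induction B)
  case (Cons b B)
  then have "ascent_swap (x # b # B @ C) (b # x # B @ C)"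
    by (simp add: ascent_swap_head)
  moreover have "ascent_swap\<^sup>*\<^sup>* (b # x # B @ C) (b # B @ x # C)"
    using Cons by (simp add: ascent_swaps_Cons)
  ultimately show ?case by (simp add: converse_rtranclp_into_rtranclp)
qed simp

lemma ascent_swaps_move_left:
  "\<forall>b\<in>set B. b < y \<Longrightarrow> ascent_swap\<^sup>*\<^sup>* (B @ y # C) (y # B @ C)"
proof (induction B)
  case (Cons b B)
  then have "ascent_swap\<^sup>*\<^sup>* (b # B @ y # C) (b # y # B @ C)"
    by (simp add: ascent_swaps_Cons)
  moreover have "ascent_swap (b # y # B @ C) (y # b # B @ C)"
    using Cons.prems by (simp add: ascent_swap_head)
  ultimately show ?case by (simp add: rtranclp.rtrancl_into_rtrancl)
qed simp

section \<open>Raising a flagged set of entries\<close>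

text \<open>An entry is a value with a flag saying whether it is to be raised by 1.  Pairwise
  compatibility is what lets the flagged entries bubble to the front and, once
  raised, back to their places by increasing swaps.\<close>

definition lift_compatible :: "int \<times> bool \<Rightarrow> int \<times> bool \<Rightarrow> bool" where
  "lift_compatible z w \<longleftrightarrow>
     (snd z \<and> \<not> snd w \<longrightarrow> fst w \<le> fst z) \<and> (\<not> snd z \<and> snd w \<longrightarrow> fst z < fst w)"

definition lift :: "int \<times> bool \<Rightarrow> int" where
  "lift z = fst z + of_bool (snd z)"

lemma ascent_swaps_flagged_to_front:
  "sorted_wrt lift_compatible zs \<Longrightarrow>
   ascent_swap\<^sup>*\<^sup>* (map fst zs) (map fst (filter snd zs) @ map fst (filter (\<lambda>z. \<not> snd z) zs))"
proof (induction zs)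
  case (Cons z zs)
  let ?T = "map fst (filter snd zs)" and ?F = "map fst (filter (\<lambda>z. \<not> snd z) zs)"
  have IH: "ascent_swap\<^sup>*\<^sup>* (fst z # map fst zs) (fst z # ?T @ ?F)"
    using Cons by (simp add: ascent_swaps_Cons)
  show ?case
  proof (cases "snd z")
    case True
    then show ?thesis using IH by simp
  next
    case False
    then have "\<forall>b\<in>set ?T. fst z < b"
      using Cons.prems by (auto simp: lift_compatible_def)
    then have "ascent_swap\<^sup>*\<^sup>* (fst z # ?T @ ?F) (?T @ fst z # ?F)"
      by (rule ascent_swaps_move_right)
    then show ?thesis using IH False by simp
  qed
qed simp

lemma ascent_swaps_raised_back:
  "sorted_wrt lift_compatible zs \<Longrightarrow>
   ascent_swap\<^sup>*\<^sup>* (map fst (filter (\<lambda>z. \<not> snd z) zs) @ map (\<lambda>z. fst z + 1) (filter snd zs))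
     (map lift zs)"
proof (induction zs)
  case (Cons z zs)
  let ?F = "map fst (filter (\<lambda>z. \<not> snd z) zs)" and ?T = "map (\<lambda>z. fst z + 1) (filter snd zs)"
  have IH: "ascent_swap\<^sup>*\<^sup>* (x # ?F @ ?T) (x # map lift zs)" for x
    using Cons by (simp add: ascent_swaps_Cons)
  show ?case
  proof (cases "snd z")
    case True
    then have "\<forall>b\<in>set ?F. b < fst z + 1"
      using Cons.prems by (auto simp: lift_compatible_def)
    then have "ascent_swap\<^sup>*\<^sup>* (?F @ (fst z + 1) # ?T) ((fst z + 1) # ?F @ ?T)"
      by (rule ascent_swaps_move_left)
    then have "ascent_swap\<^sup>*\<^sup>* (?F @ (fst z + 1) # ?T) ((fst z + 1) # map lift zs)"
      using IH[of "fst z + 1"] by (rule rtranclp_trans)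
    with True show ?thesis
      by (simp add: lift_def[of z])
  next
    case False
    then show ?thesis using IH[of "fst z"] by (simp add: lift_def[of z])
  qed
qed simp

lemma omega_funpow_append:
  "(omega ^^ length A) (A @ B) = B @ map (\<lambda>x. x + 1) A"
proof (induction A arbitrary: B)
  case (Cons a A)
  have "(omega ^^ length (a # A)) ((a # A) @ B) = (omega ^^ length A) (A @ (B @ [a + 1]))"
    by (simp only: length_Cons funpow_Suc_right o_apply) (simp add: omega_def)
  then show ?case using Cons.IH by simp
qed simp

context
  fixes n k r :: nat
begin

abbreviation reachable :: "int list \<Rightarrow> int list \<Rightarrow> bool" where
  "reachable \<equiv> (step_ok n k r)\<^sup>*\<^sup>*"

lemma ascent_swaps_reachable:
  assumes "ascent_swap\<^sup>*\<^sup>* l l'" and "length l = n"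
  shows "reachable l l'"
  using assms
proof (induction rule: rtranclp_induct)
  case (step l' l'')
  have "length l' = n"
    using step.hyps(1) step.prems
    by (induction rule: rtranclp_induct) (auto simp: ascent_swap_length)
  then have "step_ok n k r l' l''"
    using step.hyps(2) ascent_swap_step_ok by blast
  then show ?case using step by (simp add: rtranclp.rtrancl_into_rtrancl)
qed simp

lemma reachable_omega_funpow: "reachable l ((omega ^^ j) l)"
  by (induction j) (auto simp: step_ok_def intro: rtranclp.rtrancl_into_rtrancl)

lemma reachable_omega_funpow_inverse: "reachable ((omega ^^ j) l) l"
  by (induction j) (auto simp: step_ok_def intro: converse_rtranclp_into_rtranclp)

lemma reachable_lift:
  assumes compatible: "sorted_wrt lift_compatible zs" and len: "length zs = n"
  shows "reachable (map fst zs) (map lift zs)"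
proof -
  let ?T = "map fst (filter snd zs)" and ?F = "map fst (filter (\<lambda>z. \<not> snd z) zs)"
    and ?T' = "map (\<lambda>z. fst z + 1) (filter snd zs)"
  have len_TF: "length (?T @ ?F) = n"
    using len sum_length_filter_compl[of snd zs] by (simp add: o_def)
  have "reachable (map fst zs) (?T @ ?F)"
    using ascent_swaps_reachable[OF ascent_swaps_flagged_to_front[OF compatible]] len by simp
  also have "reachable (?T @ ?F) ((omega ^^ length ?T) (?T @ ?F))"
    by (rule reachable_omega_funpow)
  also have "(omega ^^ length ?T) (?T @ ?F) = ?F @ ?T'"
    using omega_funpow_append[of ?T ?F] by (simp add: o_def)
  also have "reachable (?F @ ?T') (map lift zs)"
    using ascent_swaps_reachable[OF ascent_swaps_raised_back[OF compatible]] len_TF by simp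
  finally show ?thesis .
qed

lemma omega_funpow_length: "(omega ^^ length l) l = map (\<lambda>x. x + 1) l"
  using omega_funpow_append[of l "[]"] by simp

lemma reachable_shift:
  fixes m :: int
  assumes len: "length l = n"
  shows "reachable l (map (\<lambda>x. x + m) l)"
proof (induction m rule: int_induct[where k = 0])
  case (step1 m)
  have "reachable (map (\<lambda>x. x + m) l) ((omega ^^ n) (map (\<lambda>x. x + m) l))"
    by (rule reachable_omega_funpow)
  also have "(omega ^^ n) (map (\<lambda>x. x + m) l) = map (\<lambda>x. x + (m + 1)) l"
    using omega_funpow_length[of "map (\<lambda>x. x + m) l"] len by simp
  finally show ?case using step1.IH by (rule rtranclp_trans[rotated])
next
  case (step2 m)
  have "map (\<lambda>x. x + m) l = (omega ^^ n) (map (\<lambda>x. x + (m - 1)) l)"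
    using omega_funpow_length[of "map (\<lambda>x. x + (m - 1)) l"] len by simp
  also have "reachable \<dots> (map (\<lambda>x. x + (m - 1)) l)"
    by (rule reachable_omega_funpow_inverse)
  finally show ?case using step2.IH by (rule rtranclp_trans[rotated])
qed simp

end

section \<open>The order defined by \<rho>\<close>

text \<open>ranks_above mu j i holds iff \<rho>(mu)_j > \<rho>(mu)_i, i.e. iff j comes before i
  among i_1, ..., i_n.\<close>

definition ranks_above :: "int list \<Rightarrow> nat \<Rightarrow> nat \<Rightarrow> bool" where
  "ranks_above mu j i \<longleftrightarrow> mu ! i < mu ! j \<or> (mu ! j = mu ! i \<and> j < i)"

lemma pos_conv_ranks_above: "pos mu i = Suc (card {j. j < length mu \<and> ranks_above mu j i})"
  unfolding pos_def ranks_above_def by (simp add: eq_commute)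

lemma ranks_above_map_strict_mono:
  "strict_mono f \<Longrightarrow> i < length mu \<Longrightarrow> j < length mu \<Longrightarrow>
   ranks_above (map f mu) j i = ranks_above mu j i"
  by (auto simp: ranks_above_def strict_mono_less strict_mono_eq)

lemma pos_le_length:
  assumes "i < length mu"
  shows "pos mu i \<le> length mu"
proof -
  have "{j. j < length mu \<and> ranks_above mu j i} \<subseteq> {..<length mu} - {i}"
    by (auto simp: ranks_above_def)
  then have "card {j. j < length mu \<and> ranks_above mu j i} \<le> length mu - 1"
    using card_mono[of "{..<length mu} - {i}"] assms by fastforce
  then show ?thesis
    using assms by (simp add: pos_conv_ranks_above)
qed

lemma pos_less_if_ranks_above:
  assumes "ranks_above mu j i" and "j < length mu"
  shows "pos mu j < pos mu i"
proof -
  have "{x. x < length mu \<and> ranks_above mu x j} \<subset> {x. x < length mu \<and> ranks_above mu x i}"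
    using assms by (auto simp: ranks_above_def)
  then show ?thesis
    unfolding pos_conv_ranks_above by (simp add: psubset_card_mono)
qed

lemma ranks_above_total: "i \<noteq> j \<Longrightarrow> ranks_above mu i j \<or> ranks_above mu j i"
  by (auto simp: ranks_above_def)

lemma inj_on_pos: "inj_on (pos mu) {..<length mu}"
proof (rule inj_onI)
  fix i j assume "i \<in> {..<length mu}" "j \<in> {..<length mu}" "pos mu i = pos mu j"
  then show "i = j"
    using ranks_above_total[of i j mu] pos_less_if_ranks_above[of mu i j]
      pos_less_if_ranks_above[of mu j i]
    by fastforce
qed

lemma idx_pos: "i < length mu \<Longrightarrow> idx mu (pos mu i) = i"
  unfolding idx_def rho_def
  by (rule the_equality) (auto dest: inj_onD[OF inj_on_pos])

definition rank_monotone :: "int list \<Rightarrow> (nat \<Rightarrow> int) \<Rightarrow> bool" where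
  "rank_monotone mu D \<longleftrightarrow> (\<forall>i<length mu. \<forall>j<length mu. ranks_above mu j i \<longrightarrow> D i \<le> D j)"

lemma enlargement_rank_monotone:
  assumes "enlargement k r lam lam'"
  shows "rank_monotone lam (\<lambda>i. lam' ! i - lam ! i)"
  unfolding rank_monotone_def
proof (intro allI impI)
  fix i j assume i: "i < length lam" and j: "j < length lam" and above: "ranks_above lam j i"
  define f where "f a = lam' ! idx lam a - lam ! idx lam a" for a
  have "f (Suc a) \<le> f a" if "a \<in> {1..<length lam}" for a
    using assms that unfolding enlargement_def f_def by fastforce
  moreover have "pos lam j \<le> pos lam i"
    using pos_less_if_ranks_above[OF above j] by simp
  moreover have "{pos lam j..<pos lam i} \<subseteq> {1..<length lam}"
    using pos_le_length[OF i] by (auto simp: pos_conv_ranks_above)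
  ultimately have "f (pos lam i) \<le> f (pos lam j)"
    by (rule lift_Suc_antimono_le_ivl)
  then show "lam' ! i - lam ! i \<le> lam' ! j - lam ! j"
    using idx_pos i j by (simp add: f_def)
qed

section \<open>Adding a rank-monotone vector\<close>

context
  fixes n k r :: nat
begin

lemma reachable_raise_upward_closed:
  assumes len: "length mu = n"
    and upward_closed: "\<And>i j. i < n \<Longrightarrow> j < n \<Longrightarrow> ranks_above mu j i \<Longrightarrow> S i \<Longrightarrow> S j"
  shows "reachable n k r mu (map (\<lambda>i. mu ! i + of_bool (S i)) [0..<n])"
proof -
  define zs where "zs = zip mu (map S [0..<n])"
  have len_zs: "length zs = n"
    using len by (simp add: zs_def)
  have zs_nth: "zs ! p = (mu ! p, S p)" if "p < n" for p
    using that len by (simp add: zs_def)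
  have "sorted_wrt lift_compatible zs"
    unfolding sorted_wrt_iff_nth_less
  proof (intro allI impI)
    fix p q assume "p < q" "q < length zs"
    then show "lift_compatible (zs ! p) (zs ! q)"
      using upward_closed[of p q] upward_closed[of q p] zs_nth len_zs
      unfolding lift_compatible_def ranks_above_def by force
  qed
  then have "reachable n k r (map fst zs) (map lift zs)"
    using len_zs by (rule reachable_lift)
  moreover have "map fst zs = mu"
    using len by (simp add: zs_def)
  moreover have "map lift zs = map (\<lambda>i. mu ! i + of_bool (S i)) [0..<n]"
    using len_zs zs_nth by (intro nth_equalityI) (auto simp: lift_def)
  ultimately show ?thesis by simp
qed

lemma reachable_add_nonneg_rank_monotone:
  assumes "length mu = n" and "\<forall>i<n. 0 \<le> D i" and "rank_monotone mu D"
  shows "reachable n k r mu (map (\<lambda>i. mu ! i + D i) [0..<n])"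
  using assms
proof (induction "nat (\<Sum>i<n. D i)" arbitrary: mu D rule: less_induct)
  case less
  note len = less.prems(1) and nonneg = less.prems(2) and monotone = less.prems(3)
  show ?case
  proof (cases "\<forall>i<n. D i = 0")
    case True
    then have "map (\<lambda>i. mu ! i + D i) [0..<n] = mu"
      using len by (intro nth_equalityI) auto
    then show ?thesis by simp
  next
    case False
    define S where "S i \<longleftrightarrow> 0 < D i" for i
    define mu1 where "mu1 = map (\<lambda>i. mu ! i + of_bool (S i)) [0..<n]"
    define D1 where "D1 i = D i - of_bool (S i)" for i
    have len1: "length mu1 = n"
      by (simp add: mu1_def)
    have mu1_nth: "mu1 ! i = mu ! i + of_bool (S i)" if "i < n" for i
      using that by (simp add: mu1_def)
    have "reachable n k r mu mu1"
      unfolding mu1_def using len monotone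
      by (intro reachable_raise_upward_closed) (force simp: S_def rank_monotone_def)+
    moreover have "reachable n k r mu1 (map (\<lambda>i. mu1 ! i + D1 i) [0..<n])"
    proof (rule less.hyps)
      obtain i0 where "i0 < n" "0 < D i0"
        using False nonneg by force
      then have "(\<Sum>i<n. D1 i) < (\<Sum>i<n. D i)"
        by (intro sum_strict_mono_ex1) (auto simp: D1_def S_def)
      moreover have "0 \<le> (\<Sum>i<n. D1 i)"
        using nonneg by (intro sum_nonneg) (simp add: D1_def S_def)
      ultimately show "nat (\<Sum>i<n. D1 i) < nat (\<Sum>i<n. D i)"
        by linarith
      show "\<forall>i<n. 0 \<le> D1 i"
        using nonneg by (simp add: D1_def S_def)
      show "rank_monotone mu1 D1"
        unfolding rank_monotone_def
      proof (intro allI impI)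
        fix i j assume ij: "i < length mu1" "j < length mu1" and "ranks_above mu1 j i"
        then have "ranks_above mu j i \<or> (S j \<and> \<not> S i)"
          using mu1_nth[of i] mu1_nth[of j] len1
          by (cases "S i"; cases "S j") (auto simp: ranks_above_def)
        then show "D1 i \<le> D1 j"
          using monotone ij len len1 nonneg by (force simp: rank_monotone_def D1_def S_def)
      qed
    qed (rule len1)
    moreover have "map (\<lambda>i. mu1 ! i + D1 i) [0..<n] = map (\<lambda>i. mu ! i + D i) [0..<n]"
      by (simp add: mu1_nth D1_def)
    ultimately show ?thesis by simp
  qed
qed

lemma reachable_add_rank_monotone:
  assumes len: "length mu = n" and monotone: "rank_monotone mu D"
  shows "reachable n k r mu (map (\<lambda>i. mu ! i + D i) [0..<n])"
proof -
  define c where "c = (\<Sum>i<n. \<bar>D i\<bar>)"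
  define mu0 where "mu0 = map (\<lambda>x. x - c) mu"
  have "reachable n k r mu mu0"
    using reachable_shift[OF len, where m = "- c"] by (simp add: mu0_def)
  also have "reachable n k r mu0 (map (\<lambda>i. mu0 ! i + (D i + c)) [0..<n])"
  proof (rule reachable_add_nonneg_rank_monotone)
    show "length mu0 = n"
      using len by (simp add: mu0_def)
    show "\<forall>i<n. 0 \<le> D i + c"
      using member_le_sum[of _ "{..<n}" "\<lambda>i. \<bar>D i\<bar>"] by (force simp: c_def)
    have "strict_mono (\<lambda>x :: int. x - c)"
      by (simp add: strict_mono_def)
    then show "rank_monotone mu0 (\<lambda>i. D i + c)"
      using monotone by (simp add: rank_monotone_def mu0_def ranks_above_map_strict_mono)
  qed
  also have "map (\<lambda>i. mu0 ! i + (D i + c)) [0..<n] = map (\<lambda>i. mu ! i + D i) [0..<n]"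
    using len by (simp add: mu0_def)
  finally show ?thesis .
qed

end

theorem proposition4p1:
  fixes n k r :: nat and lam lam' :: "int list"
  assumes "1 \<le> k" and "k \<le> n - 1" and "2 \<le> r"
    and "length lam = n"
    and "enlargement k r lam lam'"
  shows "\<exists>nus :: int list list. nus \<noteq> [] \<and> hd nus = lam \<and> last nus = lam' \<and>
           (\<forall>a. a + 1 < length nus \<longrightarrow> step_ok n k r (nus ! a) (nus ! (a+1)))"
proof -
  note len = \<open>length lam = n\<close> and enlarged = \<open>enlargement k r lam lam'\<close>
  have "reachable n k r lam (map (\<lambda>i. lam ! i + (lam' ! i - lam ! i)) [0..<n])"
    using len enlargement_rank_monotone[OF enlarged] by (rule reachable_add_rank_monotone)
  also have "map (\<lambda>i. lam ! i + (lam' ! i - lam ! i)) [0..<n] = lam'"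
    using len enlarged by (intro nth_equalityI) (auto simp: enlargement_def)
  finally show ?thesis
    by (rule rtranclp_imp_chain_list)
qed

end
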